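(* Let $G$ be a graph. The following are equivalent: (a1) $M_1(G)$ is a non-trivial matroid and $G$ is a connected cacti-graph; (a2) $M_1(G)$ is a connected matroid.
   Context: Graphs are finite, may have loops and parallel edges, and have no isolated vertices. A leaf is a vertex incident to exactly one edge, which is not a loop. A cacti-graph is a graph with no isolated vertices, no leaves, and no component that is a cycle. For $X\subseteq E(G)$, $G\langle X\rangle$ is the subgraph with edge set $X$ and vertex set the vertices incident to $X$. $M_1(G)$ is the matroid on $E(G)$ whose circuits are the inclusion-minimal members of $\{C\subseteq E(G):C\neq\emptyset,\ |C|=|V(G\langle C\rangle)|+1\}$. A matroid is non-trivial if it has at least one circuit and at least one cocircuit; it is connected if its ground set has at least two elements and every two elements lie in a common circuit. *)

theory Defs
  imports Main
begin

text \<open>A (multi)graph is given by a finite edge set E and an endpoint map ends: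
  each edge has one endpoint (a loop) or two endpoints.  Since graphs have no
  isolated vertices, the vertex set is the set of all endpoints.\<close>

definition graph :: "'e set \<Rightarrow> ('e \<Rightarrow> 'v set) \<Rightarrow> bool" where
  "graph E ends \<longleftrightarrow> finite E \<and> (\<forall>e\<in>E. card (ends e) = 1 \<or> card (ends e) = 2)"

definition verts :: "'e set \<Rightarrow> ('e \<Rightarrow> 'v set) \<Rightarrow> 'v set" where
  "verts E ends = \<Union> (ends ` E)"

definition is_loop :: "('e \<Rightarrow> 'v set) \<Rightarrow> 'e \<Rightarrow> bool" where
  "is_loop ends e \<longleftrightarrow> card (ends e) = 1"

definition incident_edges :: "'e set \<Rightarrow> ('e \<Rightarrow> 'v set) \<Rightarrow> 'v \<Rightarrow> 'e set" where
  "incident_edges E ends v = {e\<in>E. v \<in> ends e}"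

definition degree :: "'e set \<Rightarrow> ('e \<Rightarrow> 'v set) \<Rightarrow> 'v \<Rightarrow> nat" where
  "degree E ends v = (\<Sum>e\<in>incident_edges E ends v. if is_loop ends e then 2 else 1)"

definition is_leaf :: "'e set \<Rightarrow> ('e \<Rightarrow> 'v set) \<Rightarrow> 'v \<Rightarrow> bool" where
  "is_leaf E ends v \<longleftrightarrow> v \<in> verts E ends \<and>
     (\<exists>e. incident_edges E ends v = {e} \<and> \<not> is_loop ends e)"

definition adj :: "'e set \<Rightarrow> ('e \<Rightarrow> 'v set) \<Rightarrow> ('v \<times> 'v) set" where
  "adj E ends = {(u, w). \<exists>e\<in>E. u \<in> ends e \<and> w \<in> ends e}"

definition reach :: "'e set \<Rightarrow> ('e \<Rightarrow> 'v set) \<Rightarrow> 'v \<Rightarrow> 'v \<Rightarrow> bool" where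
  "reach E ends u w \<longleftrightarrow> (u, w) \<in> (adj E ends)\<^sup>*"

definition graph_connected :: "'e set \<Rightarrow> ('e \<Rightarrow> 'v set) \<Rightarrow> bool" where
  "graph_connected E ends \<longleftrightarrow> verts E ends \<noteq> {} \<and>
     (\<forall>u\<in>verts E ends. \<forall>w\<in>verts E ends. reach E ends u w)"

definition component_edges :: "'e set \<Rightarrow> ('e \<Rightarrow> 'v set) \<Rightarrow> 'v \<Rightarrow> 'e set" where
  "component_edges E ends v = {e\<in>E. \<exists>u\<in>ends e. reach E ends v u}"

text \<open>A cycle: a connected graph in which every vertex has degree 2
  (includes a single loop and a pair of parallel edges).\<close>
definition is_cycle_graph :: "'e set \<Rightarrow> ('e \<Rightarrow> 'v set) \<Rightarrow> bool" where
  "is_cycle_graph E ends \<longleftrightarrow> graph_connected E ends \<and>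
     (\<forall>v\<in>verts E ends. degree E ends v = 2)"

definition cacti_graph :: "'e set \<Rightarrow> ('e \<Rightarrow> 'v set) \<Rightarrow> bool" where
  "cacti_graph E ends \<longleftrightarrow>
     (\<forall>v\<in>verts E ends. \<not> is_leaf E ends v) \<and>
     (\<forall>v\<in>verts E ends. \<not> is_cycle_graph (component_edges E ends v) ends)"

text \<open>Circuits of M_1(G): inclusion-minimal nonempty C \<subseteq> E with |C| = |V(G<C>)| + 1.
  Here V(G<C>) = verts C ends.\<close>
definition M1_circuit :: "'e set \<Rightarrow> ('e \<Rightarrow> 'v set) \<Rightarrow> 'e set \<Rightarrow> bool" where
  "M1_circuit E ends C \<longleftrightarrow>
     (let P = (\<lambda>D. D \<subseteq> E \<and> D \<noteq> {} \<and> card D = card (verts D ends) + 1)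
      in P C \<and> (\<forall>D. P D \<and> D \<subseteq> C \<longrightarrow> D = C))"

definition mat_indep :: "'e set \<Rightarrow> ('e set \<Rightarrow> bool) \<Rightarrow> 'e set \<Rightarrow> bool" where
  "mat_indep E circ X \<longleftrightarrow> X \<subseteq> E \<and> (\<forall>C. circ C \<longrightarrow> \<not> C \<subseteq> X)"

definition mat_basis :: "'e set \<Rightarrow> ('e set \<Rightarrow> bool) \<Rightarrow> 'e set \<Rightarrow> bool" where
  "mat_basis E circ B \<longleftrightarrow> mat_indep E circ B \<and>
     (\<forall>X. mat_indep E circ X \<and> B \<subseteq> X \<longrightarrow> X = B)"

definition mat_cocircuit :: "'e set \<Rightarrow> ('e set \<Rightarrow> bool) \<Rightarrow> 'e set \<Rightarrow> bool" where
  "mat_cocircuit E circ D \<longleftrightarrow>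
     (let P = (\<lambda>D. D \<subseteq> E \<and> D \<noteq> {} \<and> (\<forall>B. mat_basis E circ B \<longrightarrow> D \<inter> B \<noteq> {}))
      in P D \<and> (\<forall>D'. P D' \<and> D' \<subseteq> D \<longrightarrow> D' = D))"

definition mat_nontrivial :: "'e set \<Rightarrow> ('e set \<Rightarrow> bool) \<Rightarrow> bool" where
  "mat_nontrivial E circ \<longleftrightarrow> (\<exists>C. circ C) \<and> (\<exists>D. mat_cocircuit E circ D)"

definition mat_connected :: "'e set \<Rightarrow> ('e set \<Rightarrow> bool) \<Rightarrow> bool" where
  "mat_connected E circ \<longleftrightarrow> card E \<ge> 2 \<and>
     (\<forall>x\<in>E. \<forall>y\<in>E. \<exists>C. circ C \<and> x \<in> C \<and> y \<in> C)"

end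

theory Submission
  imports Defs
begin

text \<open>A set \<open>X\<close> is independent in \<open>M\<^sub>1(G)\<close> iff \<open>|Y| \<le> |V(Y)|\<close> for all \<open>Y \<subseteq> X\<close>;
  submodularity of \<open>|V(\<cdot>)|\<close> yields circuit elimination, so sharing a circuit is an
  equivalence relation on \<open>E\<close>.

  (a2) \<open>\<Longrightarrow>\<close> (a1): a circuit cannot cross a union of components, nor contain a pendant
  edge (removing it would lose a vertex), and if all degrees are at most 2 a double count
  shows that every edge set is independent.

  (a1) \<open>\<Longrightarrow>\<close> (a2): suppose a class \<open>A\<close> of the equivalence is proper, and let \<open>B = E - A\<close>
  and \<open>\<partial>A = V(A) \<inter> V(B)\<close>.  For a basis \<open>X\<close> of \<open>A\<close> with greatest tight part \<open>T\<close>
  (\<open>|T| = |V(T)|\<close>), every edge of \<open>A - X\<close> lies on \<open>V(T)\<close>, so counting the ends of the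
  edges of \<open>X - T\<close> at the vertices of \<open>V(A) - V(T)\<close>, which have degree \<open>\<ge> 2\<close> in \<open>A\<close>
  off \<open>\<partial>A\<close> because \<open>G\<close> has no leaves, gives \<open>2|V(A)| \<le> |\<partial>A| + 2|X|\<close>, with equality
  only if \<open>A - (X - T)\<close> is a union of components.  Since circuits do not cross
  between \<open>A\<close> and \<open>B\<close>, bases \<open>X\<^sub>A\<close>, \<open>X\<^sub>B\<close> combine to an independent set, so
  \<open>|X\<^sub>A| + |X\<^sub>B| \<le> |V(A)| + |V(B)| - |\<partial>A|\<close>; hence equality holds on both sides and, \<open>G\<close>
  being connected, \<open>E = X\<^sub>A \<union> X\<^sub>B\<close> is independent, contradicting the existence of a circuit.\<close>

lemma verts_mono: "X \<subseteq> Y \<Longrightarrow> verts X ends \<subseteq> verts Y ends"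
  unfolding verts_def by auto

lemma verts_Un: "verts (X \<union> Y) ends = verts X ends \<union> verts Y ends"
  unfolding verts_def by auto

lemma verts_insert: "verts (insert h X) ends = ends h \<union> verts X ends"
  unfolding verts_def by auto

lemma verts_empty [simp]: "verts {} ends = {}"
  unfolding verts_def by auto

lemma mem_verts_iff: "v \<in> verts X ends \<longleftrightarrow> (\<exists>h\<in>X. v \<in> ends h)"
  unfolding verts_def by auto

lemma card_psubset_of_mem:
  "finite B \<Longrightarrow> A \<subseteq> B \<Longrightarrow> x \<in> B \<Longrightarrow> x \<notin> A \<Longrightarrow> card A < card B"
  by (metis psubsetI psubset_card_mono)

lemma two_mult_card_le_sum_plus_card:
  fixes f :: "'a \<Rightarrow> nat"
  assumes "finite Q" "\<And>v. v \<in> Q \<Longrightarrow> 1 \<le> f v" "\<And>v. v \<in> Q - W \<Longrightarrow> 2 \<le> f v"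
  shows "2 * card Q \<le> sum f Q + card (Q \<inter> W)"
proof -
  have "(\<Sum>v\<in>Q. 2) \<le> (\<Sum>v\<in>Q. f v + (if v \<in> W then 1 else 0))"
  proof (rule sum_mono)
    fix v assume "v \<in> Q"
    then show "2 \<le> f v + (if v \<in> W then 1 else 0)"
      using assms(2)[of v] assms(3)[of v] by (cases "v \<in> W") auto
  qed
  moreover have "card (Q \<inter> W) = (\<Sum>v\<in>Q. if v \<in> W then 1 else 0)"
    using assms(1) by (simp add: sum.inter_filter[symmetric] Int_def)
  ultimately show ?thesis by (simp add: sum.distrib)
qed

lemma exists_cocircuit:
  assumes finE: "finite E" and "E \<noteq> {}" and basis_ne: "\<And>B. mat_basis E circ B \<Longrightarrow> B \<noteq> {}"
  shows "\<exists>D. mat_cocircuit E circ D"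
proof -
  let ?P = "\<lambda>D. D \<subseteq> E \<and> D \<noteq> {} \<and> (\<forall>B. mat_basis E circ B \<longrightarrow> D \<inter> B \<noteq> {})"
  have "E \<inter> B \<noteq> {}" if "mat_basis E circ B" for B
  proof -
    have "B \<subseteq> E" using that unfolding mat_basis_def mat_indep_def by blast
    then show ?thesis using basis_ne[OF that] by blast
  qed
  with \<open>E \<noteq> {}\<close> have "?P E" by blast
  then obtain D where D: "?P D" and Dmin: "\<And>D'. ?P D' \<Longrightarrow> card D \<le> card D'"
    using ex_has_least_nat[of ?P E card] by blast
  have "mat_cocircuit E circ D"
    unfolding mat_cocircuit_def Let_def
  proof (intro conjI allI impI)
    fix D' assume D': "?P D' \<and> D' \<subseteq> D"
    then have "card D \<le> card D'" using Dmin by blast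
    moreover have "finite D" using D finE finite_subset by blast
    ultimately show "D' = D" using D' card_seteq by blast
  qed (use D in auto)
  then show ?thesis by blast
qed

locale multigraph =
  fixes E :: "'e set" and ends :: "'e \<Rightarrow> 'v set"
  assumes graph: "graph E ends"
begin

section \<open>Circuits and independent sets of \<open>M\<^sub>1(G)\<close>\<close>

abbreviation V :: "'e set \<Rightarrow> 'v set" where "V X \<equiv> verts X ends"
abbreviation circuit :: "'e set \<Rightarrow> bool" where "circuit C \<equiv> M1_circuit E ends C"

text \<open>The independent sets of \<open>M\<^sub>1(G)\<close> are exactly the sparse edge sets.\<close>
definition sparse :: "'e set \<Rightarrow> bool" where
  "sparse X \<longleftrightarrow> (\<forall>Y\<subseteq>X. card Y \<le> card (V Y))"

definition tight :: "'e set \<Rightarrow> bool" where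
  "tight X \<longleftrightarrow> card X = card (V X)"

lemma finite_edges: "finite E"
  using graph by (simp add: graph_def)

lemma finite_subset_edges: "X \<subseteq> E \<Longrightarrow> finite X"
  using finite_edges finite_subset by blast

lemma card_ends: "h \<in> E \<Longrightarrow> card (ends h) = 1 \<or> card (ends h) = 2"
  using graph by (simp add: graph_def)

lemma finite_ends: "h \<in> E \<Longrightarrow> finite (ends h)"
  using card_ends by (metis card.infinite zero_neq_numeral zero_neq_one)

lemma ends_nonempty: "h \<in> E \<Longrightarrow> ends h \<noteq> {}"
  using card_ends by fastforce

lemma finite_verts: "X \<subseteq> E \<Longrightarrow> finite (V X)"
  unfolding verts_def using finite_subset_edges finite_ends by (meson finite_UN_I subsetD)

lemma card_verts_pos:
  assumes "h \<in> X" "X \<subseteq> E"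
  shows "0 < card (V X)"
proof -
  obtain v where "v \<in> ends h" using ends_nonempty assms by blast
  then have "v \<in> V X" using assms(1) by (auto simp: mem_verts_iff)
  then show ?thesis using finite_verts[OF assms(2)] card_gt_0_iff by blast
qed

lemma M1_circuit_iff: "circuit C \<longleftrightarrow> C \<subseteq> E \<and> C \<noteq> {} \<and> card C = card (V C) + 1 \<and>
   (\<forall>D. D \<subseteq> E \<and> D \<noteq> {} \<and> card D = card (V D) + 1 \<and> D \<subseteq> C \<longrightarrow> D = C)"
  unfolding M1_circuit_def Let_def by blast

lemma circuit_subset_edges: "circuit C \<Longrightarrow> C \<subseteq> E"
  and circuit_nonempty: "circuit C \<Longrightarrow> C \<noteq> {}"
  and card_circuit: "circuit C \<Longrightarrow> card C = card (V C) + 1"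
  by (simp_all add: M1_circuit_iff)

lemma finite_circuit: "circuit C \<Longrightarrow> finite C"
  using circuit_subset_edges finite_subset_edges by blast

lemma two_le_card_circuit:
  assumes C: "circuit C"
  shows "2 \<le> card C"
proof -
  obtain h where "h \<in> C" using circuit_nonempty[OF C] by blast
  with C show ?thesis
    using card_circuit[OF C] card_verts_pos[of h C] circuit_subset_edges[OF C] by simp
qed

text \<open>A set of minimum size among those with more edges than vertices is a circuit.\<close>
lemma exists_circuit_if_card_verts_less:
  assumes "Y \<subseteq> E" "card (V Y) < card Y"
  shows "\<exists>C. circuit C \<and> C \<subseteq> Y"
proof -
  let ?S = "{Z. Z \<subseteq> Y \<and> card (V Z) < card Z}"
  obtain Z where Z: "Z \<in> ?S" and Zmin: "\<And>Z'. Z' \<in> ?S \<Longrightarrow> card Z \<le> card Z'"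
    using ex_has_least_nat[of "\<lambda>Z. Z \<in> ?S" Y card] assms by blast
  have ZE: "Z \<subseteq> E" and finZ: "finite Z" using Z assms(1) finite_subset_edges by auto
  then obtain z where z: "z \<in> Z" using Z by fastforce
  have "Z - {z} \<notin> ?S"
    using Zmin[of "Z - {z}"] card_Diff1_less[OF finZ z] by linarith
  moreover have "card (V (Z - {z})) \<le> card (V Z)"
    using card_mono[OF finite_verts[OF ZE] verts_mono] by blast
  ultimately have tight_plus_one: "card Z = card (V Z) + 1"
    using Z z finZ by (auto simp: card_Diff_singleton)
  have "circuit Z" unfolding M1_circuit_iff
  proof (intro conjI allI impI)
    fix D
    assume D: "D \<subseteq> E \<and> D \<noteq> {} \<and> card D = card (V D) + 1 \<and> D \<subseteq> Z"
    then have "card Z \<le> card D" using Z Zmin[of D] by auto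
    with D finZ show "D = Z" using card_seteq by blast
  qed (use ZE z tight_plus_one in auto)
  with Z show ?thesis by blast
qed

lemma circuit_eq_if_subset: "circuit C \<Longrightarrow> circuit C' \<Longrightarrow> C \<subseteq> C' \<Longrightarrow> C = C'"
  unfolding M1_circuit_iff by blast

lemma card_le_card_verts_if_psubset_circuit:
  assumes C: "circuit C" and DC: "D \<subset> C"
  shows "card D \<le> card (V D)"
proof (rule ccontr)
  assume "\<not> ?thesis"
  moreover have "D \<subseteq> E" using circuit_subset_edges[OF C] DC by blast
  ultimately obtain C' where C': "circuit C'" "C' \<subseteq> D"
    using exists_circuit_if_card_verts_less[of D] by auto
  then have "C' = C" using circuit_eq_if_subset[OF C'(1) C] DC by blast
  with C' DC show False by blast
qed

lemma card_le_card_verts_if_sparse: "sparse X \<Longrightarrow> Y \<subseteq> X \<Longrightarrow> card Y \<le> card (V Y)"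
  unfolding sparse_def by blast

lemma circuit_not_subset_sparse:
  assumes "sparse X" "circuit C"
  shows "\<not> C \<subseteq> X"
proof
  assume "C \<subseteq> X"
  with assms(1) have "card C \<le> card (V C)" by (rule card_le_card_verts_if_sparse)
  with card_circuit[OF assms(2)] show False by simp
qed

lemma sparse_if_no_circuit:
  assumes "X \<subseteq> E" "\<And>C. circuit C \<Longrightarrow> \<not> C \<subseteq> X"
  shows "sparse X"
  unfolding sparse_def
proof (intro allI impI)
  fix Y assume "Y \<subseteq> X"
  with assms show "card Y \<le> card (V Y)"
    using exists_circuit_if_card_verts_less[of Y] by (meson order_trans not_le)
qed

lemma sparse_subset: "sparse X \<Longrightarrow> Y \<subseteq> X \<Longrightarrow> sparse Y"
  unfolding sparse_def by blast

text \<open>The count \<open>|C| = |V(C)| + 1\<close> and submodularity of \<open>|V(\<cdot>)|\<close>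
  give \<open>|C\<^sub>1 \<union> C\<^sub>2| \<ge> |V(C\<^sub>1 \<union> C\<^sub>2)| + 2\<close>.\<close>
lemma circuit_elimination:
  assumes C1: "circuit C1" and C2: "circuit C2" and "C1 \<noteq> C2" "e \<in> C1 \<inter> C2"
  shows "\<exists>C. circuit C \<and> C \<subseteq> (C1 \<union> C2) - {e}"
proof -
  have fin: "finite C1" "finite C2" using C1 C2 finite_circuit by auto
  have E12: "C1 \<subseteq> E" "C2 \<subseteq> E" using C1 C2 circuit_subset_edges by auto
  have "C1 \<inter> C2 \<subset> C1" using circuit_eq_if_subset[OF C1 C2] assms(3) by blast
  then have "card (C1 \<inter> C2) \<le> card (V (C1 \<inter> C2))"
    by (rule card_le_card_verts_if_psubset_circuit[OF C1])
  also have "\<dots> \<le> card (V C1 \<inter> V C2)"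
    using finite_verts[OF E12(1)] by (intro card_mono) (auto simp: mem_verts_iff)
  finally have "card (V (C1 \<union> C2)) + 2 \<le> card (C1 \<union> C2)"
    using card_Un_Int[OF fin] card_Un_Int[OF finite_verts[OF E12(1)] finite_verts[OF E12(2)]]
      card_circuit[OF C1] card_circuit[OF C2] unfolding verts_Un by linarith
  moreover have "card (V ((C1 \<union> C2) - {e})) \<le> card (V (C1 \<union> C2))"
    using E12 finite_verts[of "C1 \<union> C2"] by (intro card_mono verts_mono) auto
  moreover have "card ((C1 \<union> C2) - {e}) = card (C1 \<union> C2) - 1"
    using assms(4) fin by simp
  ultimately have "card (V ((C1 \<union> C2) - {e})) < card ((C1 \<union> C2) - {e})"
    by linarith
  moreover have "(C1 \<union> C2) - {e} \<subseteq> E" using E12 by blast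
  ultimately show ?thesis using exists_circuit_if_card_verts_less by blast
qed

lemma strong_circuit_elimination:
  "circuit C1 \<Longrightarrow> circuit C2 \<Longrightarrow> e \<in> C1 \<inter> C2 \<Longrightarrow> f \<in> C1 - C2 \<Longrightarrow>
   \<exists>C. circuit C \<and> C \<subseteq> (C1 \<union> C2) - {e} \<and> f \<in> C"
proof (induction "card (C1 \<union> C2)" arbitrary: C1 C2 e f rule: less_induct)
  case less
  have fin: "finite (C1 \<union> C2)" using less.prems(1,2) finite_circuit by blast
  obtain C3 where C3: "circuit C3" "C3 \<subseteq> (C1 \<union> C2) - {e}"
    using circuit_elimination[OF less.prems(1,2)] less.prems(3,4) by blast
  show ?case
  proof (cases "f \<in> C3")
    case True
    with C3 show ?thesis by blast
  next
    case False
    have "\<not> C3 \<subseteq> C1"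
      using circuit_eq_if_subset[OF C3(1) less.prems(1)] C3(2) less.prems(3) by blast
    then obtain g where g: "g \<in> C3 \<inter> C2" "g \<notin> C1" using C3(2) by blast
    have "card (C2 \<union> C3) < card (C1 \<union> C2)"
      using C3(2) False less.prems(4) by (intro card_psubset_of_mem[OF fin, of _ f]) auto
    then obtain C4 where C4: "circuit C4" "C4 \<subseteq> (C2 \<union> C3) - {g}" "e \<in> C4"
      using less.hyps[of C2 C3 g e] less.prems(2,3) C3 g by blast
    have "card (C1 \<union> C4) < card (C1 \<union> C2)"
      using C3(2) C4(2) g by (intro card_psubset_of_mem[OF fin, of _ g]) auto
    then obtain C5 where C5: "circuit C5" "C5 \<subseteq> (C1 \<union> C4) - {e}" "f \<in> C5"
      using less.hyps[of C1 C4 e f] less.prems(1,3,4) C4 False by blast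
    then show ?thesis using C4(2) C3(2) by blast
  qed
qed

lemma circuit_through_both_if_circuits_meet:
  "circuit C1 \<Longrightarrow> circuit C2 \<Longrightarrow> x \<in> C1 \<Longrightarrow> z \<in> C2 \<Longrightarrow> C1 \<inter> C2 \<noteq> {} \<Longrightarrow>
   \<exists>C. circuit C \<and> x \<in> C \<and> z \<in> C"
proof (induction "card (C1 \<union> C2)" arbitrary: C1 C2 rule: less_induct)
  case less
  have fin: "finite (C1 \<union> C2)" using less.prems(1,2) finite_circuit by blast
  show ?case
  proof (cases "z \<in> C1 \<or> x \<in> C2")
    case True
    with less.prems(1-4) show ?thesis by blast
  next
    case False
    obtain y where y: "y \<in> C1 \<inter> C2" using less.prems(5) by blast
    obtain C3 where C3: "circuit C3" "C3 \<subseteq> (C1 \<union> C2) - {y}" "x \<in> C3"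
      using strong_circuit_elimination[OF less.prems(1,2) y] less.prems(3) False by blast
    show ?thesis
    proof (cases "z \<in> C3")
      case True
      with C3 show ?thesis by blast
    next
      case z_notin: False
      have "\<not> C3 \<subseteq> C1"
        using circuit_eq_if_subset[OF C3(1) less.prems(1)] C3(2) y by blast
      then obtain w where w: "w \<in> C2 \<inter> C3" "w \<notin> C1" using C3(2) by blast
      obtain C4 where C4: "circuit C4" "C4 \<subseteq> (C2 \<union> C3) - {w}" "z \<in> C4"
        using strong_circuit_elimination[OF less.prems(2) C3(1) w(1)] less.prems(4) z_notin
        by blast
      have "C1 \<inter> C4 \<noteq> {}"
      proof
        assume "C1 \<inter> C4 = {}"
        then have "C4 \<subseteq> C2" using C4(2) C3(2) by blast
        then show False using circuit_eq_if_subset[OF C4(1) less.prems(2)] C4(2) w by blast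
      qed
      moreover have "card (C1 \<union> C4) < card (C1 \<union> C2)"
        using C3(2) C4(2) w by (intro card_psubset_of_mem[OF fin, of _ w]) auto
      ultimately show ?thesis using less.hyps less.prems(1,3) C4(1,3) by blast
    qed
  qed
qed

section \<open>Degrees\<close>

definition end_weight :: "'e \<Rightarrow> nat" where
  "end_weight h = (if is_loop ends h then 2 else 1)"

lemma end_weight_mult_card_ends: "h \<in> E \<Longrightarrow> end_weight h * card (ends h) = 2"
  using card_ends unfolding end_weight_def is_loop_def by auto

lemma sum_degree_eq:
  assumes "finite F" "finite S"
  shows "(\<Sum>v\<in>S. degree F ends v) = (\<Sum>h\<in>F. end_weight h * card (ends h \<inter> S))"
proof -
  have "(\<Sum>v\<in>S. degree F ends v) = (\<Sum>v\<in>S. \<Sum>h\<in>F. if v \<in> ends h then end_weight h else 0)"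
    unfolding degree_def incident_edges_def end_weight_def
    by (simp add: sum.inter_filter[OF assms(1)])
  also have "\<dots> = (\<Sum>h\<in>F. \<Sum>v\<in>S. if v \<in> ends h then end_weight h else 0)"
    by (rule sum.swap)
  also have "\<dots> = (\<Sum>h\<in>F. end_weight h * card (ends h \<inter> S))"
    using assms(2) by (simp add: sum.If_cases Int_commute mult.commute)
  finally show ?thesis .
qed

lemma sum_degree_verts:
  assumes D: "D \<subseteq> E"
  shows "(\<Sum>v\<in>V D. degree D ends v) = 2 * card D"
proof -
  have "(\<Sum>v\<in>V D. degree D ends v) = (\<Sum>h\<in>D. end_weight h * card (ends h \<inter> V D))"
    using sum_degree_eq[OF finite_subset_edges[OF D] finite_verts[OF D]] .
  also have "\<dots> = (\<Sum>h\<in>D. 2)"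
  proof (rule sum.cong[OF refl])
    fix h assume "h \<in> D"
    then have "ends h \<inter> V D = ends h" by (auto simp: mem_verts_iff)
    with \<open>h \<in> D\<close> D show "end_weight h * card (ends h \<inter> V D) = 2"
      using end_weight_mult_card_ends by auto
  qed
  finally show ?thesis by simp
qed

lemma degree_mono: "D \<subseteq> F \<Longrightarrow> F \<subseteq> E \<Longrightarrow> degree D ends v \<le> degree F ends v"
  unfolding degree_def incident_edges_def
  by (rule sum_mono2) (use finite_subset_edges in auto)

lemma one_le_degree:
  assumes "X \<subseteq> E" "v \<in> V X"
  shows "1 \<le> degree X ends v"
proof -
  obtain h where h: "h \<in> X" "v \<in> ends h" using assms(2) by (auto simp: mem_verts_iff)
  then have "incident_edges {h} ends v = {h}" unfolding incident_edges_def by auto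
  then have "1 \<le> degree {h} ends v" unfolding degree_def by simp
  also have "\<dots> \<le> degree X ends v" using degree_mono[of "{h}" X] h assms(1) by simp
  finally show ?thesis .
qed

lemma two_le_degree_if_not_leaf:
  assumes X: "X \<subseteq> E" and v: "v \<in> V X" and "\<not> is_leaf X ends v"
  shows "2 \<le> degree X ends v"
proof -
  obtain h where h: "h \<in> incident_edges X ends v"
    using v by (auto simp: mem_verts_iff incident_edges_def)
  show ?thesis
  proof (cases "incident_edges X ends v = {h}")
    case True
    then have "is_loop ends h" using assms(2,3) unfolding is_leaf_def by blast
    with True show ?thesis unfolding degree_def by simp
  next
    case False
    then obtain h' where h': "h' \<in> incident_edges X ends v" "h' \<noteq> h" using h by blast
    have "(2::nat) = (\<Sum>e\<in>{h, h'}. 1)" using h'(2) by simp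
    also have "\<dots> \<le> (\<Sum>e\<in>{h, h'}. if is_loop ends e then 2 else 1)" by (rule sum_mono) simp
    also have "\<dots> \<le> degree X ends v"
      unfolding degree_def using h h' finite_subset_edges[OF X]
      by (intro sum_mono2) (auto simp: incident_edges_def)
    finally show ?thesis .
  qed
qed

text \<open>By double counting, \<open>2|D| \<le> 2|V(D)|\<close> for every \<open>D\<close>.\<close>
lemma sparse_if_degree_le_two:
  assumes "\<forall>v\<in>V E. degree E ends v \<le> 2"
  shows "sparse E"
  unfolding sparse_def
proof (intro allI impI)
  fix D assume D: "D \<subseteq> E"
  have "2 * card D = (\<Sum>v\<in>V D. degree D ends v)" using sum_degree_verts[OF D] by simp
  also have "\<dots> \<le> (\<Sum>v\<in>V D. degree E ends v)"
    by (rule sum_mono) (rule degree_mono[OF D subset_refl])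
  also have "\<dots> \<le> (\<Sum>v\<in>V D. 2)"
  proof (rule sum_mono)
    fix v assume "v \<in> V D"
    then have "v \<in> V E" by (rule subsetD[OF verts_mono[OF D]])
    with assms show "degree E ends v \<le> 2" by blast
  qed
  finally show "card D \<le> card (V D)" by simp
qed

section \<open>Boundaries\<close>

text \<open>\<open>boundary P = {}\<close> means that \<open>P\<close> is a union of components of the graph.\<close>
definition boundary :: "'e set \<Rightarrow> 'v set" where
  "boundary A = V A \<inter> V (E - A)"

lemma trivial_if_empty_boundary:
  assumes conn: "graph_connected E ends" and "P \<subseteq> E" and sep: "boundary P = {}"
  shows "P = {} \<or> P = E"
proof (rule ccontr)
  assume "\<not> ?thesis"
  then obtain h h' where h: "h \<in> P" and h': "h' \<in> E - P" using \<open>P \<subseteq> E\<close> by blast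
  obtain u w where u: "u \<in> ends h" and w: "w \<in> ends h'"
    using ends_nonempty h h' \<open>P \<subseteq> E\<close> by blast
  have "u \<in> V E" "w \<in> V E" using u w h h' \<open>P \<subseteq> E\<close> by (auto simp: mem_verts_iff)
  with conn have "(u, w) \<in> (adj E ends)\<^sup>*" unfolding graph_connected_def reach_def by blast
  then have "w \<in> V P"
  proof (induction rule: rtrancl_induct)
    case base
    from u h show ?case by (auto simp: mem_verts_iff)
  next
    case (step y z)
    then obtain e where e: "e \<in> E" "y \<in> ends e" "z \<in> ends e" unfolding adj_def by blast
    have "e \<in> P"
    proof (rule ccontr)
      assume "e \<notin> P"
      with e have "y \<in> V (E - P)" by (auto simp: mem_verts_iff)
      with step.IH sep show False unfolding boundary_def by blast
    qed
    with e show ?case by (auto simp: mem_verts_iff)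
  qed
  moreover have "w \<in> V (E - P)" using w h' by (auto simp: mem_verts_iff)
  ultimately show False using sep unfolding boundary_def by blast
qed

text \<open>Otherwise \<open>C \<inter> P\<close> and \<open>C - P\<close>, both proper subsets of \<open>C\<close>, have disjoint vertex sets,
  so \<open>|C| \<le> |V(C \<inter> P)| + |V(C - P)| = |V(C)|\<close>.\<close>
lemma circuit_subset_or_disjoint_if_empty_boundary:
  assumes C: "circuit C" and sep: "boundary P = {}"
  shows "C \<subseteq> P \<or> C \<inter> P = {}"
proof (rule ccontr)
  assume split: "\<not> ?thesis"
  have CE: "C \<subseteq> E" using circuit_subset_edges[OF C] .
  have "V (C \<inter> P) \<subseteq> V P" "V (C - P) \<subseteq> V (E - P)"
    using CE by (auto simp: mem_verts_iff intro!: bexI)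
  then have disj: "V (C \<inter> P) \<inter> V (C - P) = {}" using sep unfolding boundary_def by blast
  have "card C = card (C \<inter> P) + card (C - P)"
    using card_Int_Diff[OF finite_circuit[OF C]] by simp
  also have "\<dots> \<le> card (V (C \<inter> P)) + card (V (C - P))"
    using split card_le_card_verts_if_psubset_circuit[OF C, of "C \<inter> P"]
      card_le_card_verts_if_psubset_circuit[OF C, of "C - P"] by (intro add_mono) blast+
  also have "\<dots> = card (V (C \<inter> P) \<union> V (C - P))"
    using CE disj by (intro card_Un_disjoint[symmetric] finite_verts) auto
  also have "V (C \<inter> P) \<union> V (C - P) = V C" by (simp only: verts_Un[symmetric] Int_Diff_Un)
  finally show False using card_circuit[OF C] by simp
qed

lemma boundary_component_edges: "boundary (component_edges E ends u) = {}"
  unfolding boundary_def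
proof (rule ccontr)
  let ?P = "component_edges E ends u"
  assume "V ?P \<inter> V (E - ?P) \<noteq> {}"
  then obtain v p q where p: "p \<in> ?P" "v \<in> ends p" and q: "q \<in> E" "q \<notin> ?P" "v \<in> ends q"
    by (auto simp: mem_verts_iff)
  obtain z where z: "z \<in> ends p" "reach E ends u z"
    using p(1) unfolding component_edges_def by blast
  have "(z, v) \<in> adj E ends" using p z(1) unfolding adj_def component_edges_def by blast
  with z(2) have "reach E ends u v" unfolding reach_def by simp
  with q show False unfolding component_edges_def by blast
qed

section \<open>The boundary inequality\<close>

lemma tight_Un:
  assumes X: "sparse X" "X \<subseteq> E" and P: "P \<subseteq> X" "tight P" and Q: "Q \<subseteq> X" "tight Q"
  shows "tight (P \<union> Q)"
proof -
  have PE: "P \<subseteq> E" "Q \<subseteq> E" using P Q X by auto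
  have "V (P \<inter> Q) \<subseteq> V P \<inter> V Q" by (intro Int_greatest verts_mono) blast+
  moreover have "finite (V P \<inter> V Q)" using finite_verts[OF PE(1)] by (rule finite_Int[OF disjI1])
  ultimately have "card (V (P \<inter> Q)) \<le> card (V P \<inter> V Q)" by (simp add: card_mono)
  moreover have "card (P \<inter> Q) \<le> card (V (P \<inter> Q))" "card (P \<union> Q) \<le> card (V (P \<union> Q))"
    using P(1) Q(1) by (auto intro: card_le_card_verts_if_sparse[OF X(1)])
  moreover have "card (P \<union> Q) + card (P \<inter> Q) = card P + card Q"
    using card_Un_Int[OF finite_subset_edges[OF PE(1)] finite_subset_edges[OF PE(2)]] by simp
  moreover have "card (V P \<union> V Q) + card (V P \<inter> V Q) = card (V P) + card (V Q)"
    using card_Un_Int[OF finite_verts[OF PE(1)] finite_verts[OF PE(2)]] by simp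
  ultimately show ?thesis using P(2) Q(2) unfolding tight_def verts_Un by linarith
qed

lemma exists_greatest_tight_subset:
  assumes X: "sparse X" "X \<subseteq> E"
  obtains T where "T \<subseteq> X" "tight T" "\<And>Y. Y \<subseteq> X \<Longrightarrow> tight Y \<Longrightarrow> Y \<subseteq> T"
proof -
  have finX: "finite X" using finite_subset_edges[OF X(2)] .
  have "\<exists>T. (T \<subseteq> X \<and> tight T) \<and> (\<forall>Y. Y \<subseteq> X \<and> tight Y \<longrightarrow> card Y \<le> card T)"
  proof (rule ex_has_greatest_nat[of _ "{}" card "card X + 1"])
    show "\<forall>Y. Y \<subseteq> X \<and> tight Y \<longrightarrow> card Y < card X + 1"
      using card_mono[OF finX] by (simp add: le_imp_less_Suc)
  qed (simp add: tight_def)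
  then obtain T where T: "T \<subseteq> X" "tight T"
    and Tmax: "\<And>Y. Y \<subseteq> X \<Longrightarrow> tight Y \<Longrightarrow> card Y \<le> card T" by blast
  have "Y \<subseteq> T" if Y: "Y \<subseteq> X" "tight Y" for Y
  proof -
    have "T \<union> Y \<subseteq> X" "tight (T \<union> Y)" using tight_Un[OF X T Y] T(1) Y(1) by auto
    then have "card (T \<union> Y) \<le> card T" by (rule Tmax)
    then have "T \<union> Y = T"
      using card_seteq[of "T \<union> Y" T] finite_subset[OF \<open>T \<union> Y \<subseteq> X\<close> finX] by blast
    then show ?thesis by blast
  qed
  with T that show ?thesis by blast
qed

lemma exists_maximal_sparse_subset:
  assumes "A \<subseteq> E"
  obtains X where "X \<subseteq> A" "sparse X" "\<And>h. h \<in> A - X \<Longrightarrow> \<not> sparse (insert h X)"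
proof -
  have finA: "finite A" using finite_subset_edges[OF assms] .
  have "\<exists>X. (X \<subseteq> A \<and> sparse X) \<and> (\<forall>Y. Y \<subseteq> A \<and> sparse Y \<longrightarrow> card Y \<le> card X)"
  proof (rule ex_has_greatest_nat[of _ "{}" card "card A + 1"])
    show "\<forall>Y. Y \<subseteq> A \<and> sparse Y \<longrightarrow> card Y < card A + 1"
      using card_mono[OF finA] by (simp add: le_imp_less_Suc)
  qed (simp add: sparse_def)
  then obtain X where X: "X \<subseteq> A" "sparse X"
    and Xmax: "\<And>Y. Y \<subseteq> A \<Longrightarrow> sparse Y \<Longrightarrow> card Y \<le> card X" by blast
  have "\<not> sparse (insert h X)" if "h \<in> A - X" for h
    using Xmax[of "insert h X"] that X(1) finite_subset[OF X(1) finA] by auto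
  with X that show ?thesis by blast
qed

text \<open>The fundamental circuit \<open>C\<close> of an edge \<open>h \<notin> X\<close> satisfies \<open>V(C - {h}) = V(C)\<close>, so
  \<open>C - {h}\<close> is tight and lies in \<open>T\<close>.\<close>
lemma ends_subset_greatest_tight:
  assumes X: "sparse X" "X \<subseteq> E" and h: "h \<in> E" "\<not> sparse (insert h X)"
    and T: "\<And>Y. Y \<subseteq> X \<Longrightarrow> tight Y \<Longrightarrow> Y \<subseteq> T"
  shows "ends h \<subseteq> V T"
proof -
  obtain C where C: "circuit C" "C \<subseteq> insert h X"
    using sparse_if_no_circuit[of "insert h X"] h X(2) by blast
  have hC: "h \<in> C" using C circuit_not_subset_sparse[OF X(1)] by blast
  let ?D = "C - {h}"
  have "card ?D = card (V C)"
    using card_circuit[OF C(1)] hC finite_circuit[OF C(1)] by simp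
  moreover have "card ?D \<le> card (V ?D)"
    using C(2) by (intro card_le_card_verts_if_sparse[OF X(1)]) blast
  moreover have sub: "V ?D \<subseteq> V C" by (rule verts_mono) blast
  ultimately have VD: "V ?D = V C"
    using card_seteq[OF finite_verts[OF circuit_subset_edges[OF C(1)]] sub] by simp
  with \<open>card ?D = card (V C)\<close> have "?D \<subseteq> T"
    using C(2) by (intro T) (auto simp: tight_def)
  then have "V ?D \<subseteq> V T" by (rule verts_mono)
  moreover have "ends h \<subseteq> V C" using hC by (auto simp: mem_verts_iff)
  ultimately show ?thesis using VD by blast
qed

lemma ends_not_subset_tight:
  assumes X: "sparse X" "X \<subseteq> E" and T: "T \<subseteq> X" "tight T" and h: "h \<in> X - T"
  shows "\<not> ends h \<subseteq> V T"
proof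
  assume "ends h \<subseteq> V T"
  then have "V (insert h T) = V T" by (auto simp: verts_insert)
  moreover have "card (insert h T) \<le> card (V (insert h T))"
    using T(1) h by (intro card_le_card_verts_if_sparse[OF X(1)]) blast
  moreover have "card (insert h T) = card T + 1"
    using h finite_subset_edges[of T] T(1) X(2) by auto
  ultimately show False using T(2) unfolding tight_def by simp
qed

text \<open>\<open>X\<close> is a basis of \<open>A\<close> and \<open>T\<close> its greatest tight subset.\<close>
lemma basis_decomposition:
  assumes "A \<subseteq> E"
  obtains X T where "X \<subseteq> A" "sparse X" "T \<subseteq> X" "tight T"
    "\<And>h. h \<in> A - X \<Longrightarrow> ends h \<subseteq> V T" "\<And>h. h \<in> X - T \<Longrightarrow> \<not> ends h \<subseteq> V T"
proof -
  obtain X where X: "X \<subseteq> A" "sparse X" "\<And>h. h \<in> A - X \<Longrightarrow> \<not> sparse (insert h X)"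
    using exists_maximal_sparse_subset[OF assms] by blast
  have XE: "X \<subseteq> E" using X(1) assms by blast
  obtain T where T: "T \<subseteq> X" "tight T" "\<And>Y. Y \<subseteq> X \<Longrightarrow> tight Y \<Longrightarrow> Y \<subseteq> T"
    using exists_greatest_tight_subset[OF X(2) XE] by blast
  show ?thesis
  proof (rule that[OF X(1,2) T(1,2)])
    show "ends h \<subseteq> V T" if "h \<in> A - X" for h
      using ends_subset_greatest_tight[OF X(2) XE _ X(3)[OF that] T(3)] that assms by blast
    show "\<not> ends h \<subseteq> V T" if "h \<in> X - T" for h
      using ends_not_subset_tight[OF X(2) XE T(1,2) that] .
  qed
qed

lemma degree_eq_if_notin_verts_compl:
  assumes "A \<subseteq> E" "v \<notin> V (E - A)"
  shows "degree E ends v = degree A ends v"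
proof -
  have "incident_edges E ends v = incident_edges A ends v"
    using assms by (auto simp: incident_edges_def mem_verts_iff)
  then show ?thesis unfolding degree_def by simp
qed

text \<open>An edge of \<open>F\<close> meeting \<open>U\<close> is not a loop and has at most one end in \<open>Q\<close>.\<close>
lemma sum_degree_plus_card_meeting_le:
  assumes F: "F \<subseteq> E" and Q: "finite Q" "Q \<inter> U = {}" and FU: "\<And>h. h \<in> F \<Longrightarrow> \<not> ends h \<subseteq> U"
  shows "(\<Sum>v\<in>Q. degree F ends v) + card {h\<in>F. ends h \<inter> U \<noteq> {}} \<le> 2 * card F"
proof -
  have "end_weight h * card (ends h \<inter> Q) + (if ends h \<inter> U \<noteq> {} then 1 else 0) \<le> 2"
    if h: "h \<in> F" for h
  proof (cases "ends h \<inter> U = {}")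
    case True
    have "end_weight h * card (ends h \<inter> Q) \<le> end_weight h * card (ends h)"
      using finite_ends h F by (intro mult_le_mono2 card_mono) auto
    also have "\<dots> = 2" using end_weight_mult_card_ends h F by blast
    finally show ?thesis using True by simp
  next
    case False
    then obtain u where u: "u \<in> ends h" "u \<in> U" by blast
    have "\<not> is_loop ends h"
    proof
      assume "is_loop ends h"
      then obtain z where "ends h = {z}" unfolding is_loop_def using card_1_singletonE by blast
      with u FU[OF h] show False by auto
    qed
    then have w: "end_weight h = 1" and two: "card (ends h) = 2"
      using card_ends h F by (auto simp: end_weight_def is_loop_def)
    have "card (ends h \<inter> Q) < card (ends h)"
      using u Q(2) finite_ends h F by (intro psubset_card_mono) auto
    with w two False show ?thesis by simp
  qed
  then have "(\<Sum>h\<in>F. end_weight h * card (ends h \<inter> Q) + (if ends h \<inter> U \<noteq> {} then 1 else 0))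
      \<le> (\<Sum>h\<in>F. 2)"
    by (rule sum_mono)
  moreover have "card {h\<in>F. ends h \<inter> U \<noteq> {}} = (\<Sum>h\<in>F. if ends h \<inter> U \<noteq> {} then 1 else 0)"
    using finite_subset_edges[OF F] by (simp add: sum.inter_filter[symmetric])
  ultimately show ?thesis
    using sum_degree_eq[OF finite_subset_edges[OF F] Q(1)] by (simp add: sum.distrib)
qed

text \<open>Double counting the edges of \<open>X - T\<close> at the vertices \<open>Q = V(A) - V(T)\<close>, all of which have
  degree at least 2 in \<open>A\<close> unless they lie on the boundary.\<close>
lemma boundary_count:
  assumes A: "A \<subseteq> E" and leafless: "\<forall>v\<in>V E. \<not> is_leaf E ends v"
    and X: "X \<subseteq> A" and T: "T \<subseteq> X" "tight T"
    and outer: "\<And>h. h \<in> A - X \<Longrightarrow> ends h \<subseteq> V T"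
    and inner: "\<And>h. h \<in> X - T \<Longrightarrow> \<not> ends h \<subseteq> V T"
  shows "2 * card (V A) + card (boundary A \<inter> V T) + card {h \<in> X - T. ends h \<inter> V T \<noteq> {}}
    \<le> card (boundary A) + 2 * card X"
proof -
  define Q where "Q = V A - V T"
  have XE: "X \<subseteq> E" "T \<subseteq> E" using A X T(1) by auto
  have VTA: "V T \<subseteq> V A" using T(1) X by (intro verts_mono) blast
  have finVA: "finite (V A)" using finite_verts[OF A] .
  have finQ: "finite Q" unfolding Q_def using finVA by simp
  have degree_eq: "degree (X - T) ends v = degree A ends v" if "v \<in> Q" for v
  proof -
    have "h \<in> X - T" if "h \<in> A" "v \<in> ends h" for h
    proof -
      have vT: "v \<notin> V T" using \<open>v \<in> Q\<close> unfolding Q_def by blast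
      with that outer[of h] have "h \<in> X" by blast
      moreover from vT that have "h \<notin> T" by (auto simp: mem_verts_iff)
      ultimately show ?thesis by blast
    qed
    then have "incident_edges (X - T) ends v = incident_edges A ends v"
      using X unfolding incident_edges_def by blast
    then show ?thesis unfolding degree_def by simp
  qed
  have "2 * card Q \<le> (\<Sum>v\<in>Q. degree (X - T) ends v) + card (Q \<inter> boundary A)"
  proof (rule two_mult_card_le_sum_plus_card[OF finQ])
    fix v assume "v \<in> Q"
    then show "1 \<le> degree (X - T) ends v"
      using one_le_degree[OF A] degree_eq unfolding Q_def by simp
  next
    fix v assume v: "v \<in> Q - boundary A"
    then have "v \<in> V E" "v \<notin> V (E - A)" "v \<in> V A"
      using verts_mono[OF A, of ends] unfolding Q_def boundary_def by auto
    then show "2 \<le> degree (X - T) ends v"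
      using two_le_degree_if_not_leaf[of E v] leafless degree_eq_if_notin_verts_compl[OF A]
        degree_eq[of v] v by simp
  qed
  moreover have "(\<Sum>v\<in>Q. degree (X - T) ends v) + card {h \<in> X - T. ends h \<inter> V T \<noteq> {}}
      \<le> 2 * card (X - T)"
    using XE inner finQ by (intro sum_degree_plus_card_meeting_le) (auto simp: Q_def)
  moreover have "card X = card (V T) + card (X - T)"
    using T card_Diff_subset[of T X] card_mono[of X T] finite_subset_edges[OF XE(1)]
    unfolding tight_def by (simp add: finite_subset)
  moreover have "card (V A) = card (V T) + card Q"
    using VTA finVA card_Diff_subset[of "V T" "V A"] card_mono[of "V A" "V T"]
    unfolding Q_def by (simp add: finite_subset)
  moreover have "card (boundary A) = card (boundary A \<inter> V T) + card (Q \<inter> boundary A)"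
  proof -
    have "boundary A \<inter> V T \<union> Q \<inter> boundary A = boundary A" "boundary A \<inter> V T \<inter> (Q \<inter> boundary A) = {}"
      unfolding Q_def boundary_def by auto
    then show ?thesis using finVA unfolding boundary_def
      by (metis card_Un_disjoint finite_Int)
  qed
  ultimately show ?thesis by linarith
qed

lemma boundary_empty_if_isolated_tight_part:
  assumes X: "X \<subseteq> A" and T: "T \<subseteq> X"
    and outer: "\<And>h. h \<in> A - X \<Longrightarrow> ends h \<subseteq> V T"
    and "boundary A \<inter> V T = {}" and "\<forall>h\<in>X - T. ends h \<inter> V T = {}"
  shows "boundary (A - (X - T)) = {}"
proof -
  let ?P = "A - (X - T)"
  have VP: "V ?P \<subseteq> V T"
  proof
    fix v assume "v \<in> V ?P"
    then obtain h where h: "h \<in> ?P" "v \<in> ends h" by (auto simp: mem_verts_iff)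
    show "v \<in> V T"
    proof (cases "h \<in> T")
      case True
      with h show ?thesis by (auto simp: mem_verts_iff)
    next
      case False
      with h outer show ?thesis by blast
    qed
  qed
  have "v \<notin> V (E - ?P)" if v: "v \<in> V T" for v
  proof
    assume "v \<in> V (E - ?P)"
    then obtain g where g: "g \<in> E" "g \<notin> ?P" "v \<in> ends g" by (auto simp: mem_verts_iff)
    show False
    proof (cases "g \<in> A")
      case True
      with g v assms(5) show False by blast
    next
      case False
      with g have "v \<in> V (E - A)" by (auto simp: mem_verts_iff)
      moreover have "v \<in> V A" using v T X by (auto simp: mem_verts_iff)
      ultimately show False using v assms(4) unfolding boundary_def by blast
    qed
  qed
  with VP show ?thesis unfolding boundary_def by blast
qed

text \<open>Here \<open>X\<close> is a basis of \<open>A\<close> and \<open>P = A - (X - T)\<close> for its greatest tight subset \<open>T\<close>.\<close>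
lemma boundary_inequality:
  assumes A: "A \<subseteq> E" and leafless: "\<forall>v\<in>V E. \<not> is_leaf E ends v"
  obtains X P where "X \<subseteq> A" "sparse X" "P \<subseteq> A" "A - P \<subseteq> X"
    "2 * card (V A) \<le> card (boundary A) + 2 * card X"
    "card (boundary A) + 2 * card X \<le> 2 * card (V A) \<Longrightarrow> boundary P = {}"
proof -
  obtain X T where X: "X \<subseteq> A" "sparse X" and T: "T \<subseteq> X" "tight T"
    and outer: "\<And>h. h \<in> A - X \<Longrightarrow> ends h \<subseteq> V T"
    and inner: "\<And>h. h \<in> X - T \<Longrightarrow> \<not> ends h \<subseteq> V T"
    using basis_decomposition[OF A] by blast
  note count = boundary_count[OF A leafless X(1) T outer inner]
  show ?thesis
  proof (rule that[OF X, of "A - (X - T)"])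
    show "A - (X - T) \<subseteq> A" "A - (A - (X - T)) \<subseteq> X" by auto
    show "2 * card (V A) \<le> card (boundary A) + 2 * card X" using count by linarith
    assume "card (boundary A) + 2 * card X \<le> 2 * card (V A)"
    with count have "card (boundary A \<inter> V T) = 0" "card {h \<in> X - T. ends h \<inter> V T \<noteq> {}} = 0"
      by linarith+
    moreover have "finite (boundary A \<inter> V T)" "finite {h \<in> X - T. ends h \<inter> V T \<noteq> {}}"
      using finite_verts[OF A] finite_subset_edges[of X] X(1) A unfolding boundary_def by auto
    ultimately have "boundary A \<inter> V T = {}" "\<forall>h\<in>X - T. ends h \<inter> V T = {}" by auto
    then show "boundary (A - (X - T)) = {}"
      using boundary_empty_if_isolated_tight_part[OF X(1) T(1) outer] by blast
  qed
qed

lemma boundary_Diff: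
  assumes "A \<subseteq> E"
  shows "boundary (E - A) = boundary A"
proof -
  have "E - (E - A) = A" using assms by blast
  then show ?thesis unfolding boundary_def by (simp add: Int_commute)
qed

lemma sparse_Un_if_circuits_on_one_side:
  assumes A: "A \<subseteq> E" and XA: "XA \<subseteq> A" "sparse XA" and XB: "XB \<subseteq> E - A" "sparse XB"
    and sep: "\<And>C. circuit C \<Longrightarrow> C \<subseteq> A \<or> C \<subseteq> E - A"
  shows "sparse (XA \<union> XB)"
proof (rule sparse_if_no_circuit)
  show "XA \<union> XB \<subseteq> E" using A XA(1) XB(1) by blast
  fix C assume C: "circuit C"
  show "\<not> C \<subseteq> XA \<union> XB"
  proof
    assume CX: "C \<subseteq> XA \<union> XB"
    from sep[OF C] have "C \<subseteq> XA \<or> C \<subseteq> XB" using CX XA(1) XB(1) by blast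
    then show False using circuit_not_subset_sparse[OF XA(2) C] circuit_not_subset_sparse[OF XB(2) C]
      by blast
  qed
qed

text \<open>Adding the inequalities of \<open>boundary_inequality\<close> for \<open>A\<close> and \<open>E - A\<close> and comparing
  with \<open>|X\<^sub>A| + |X\<^sub>B| \<le> |V(A) \<union> V(E - A)|\<close> forces equality on both sides.\<close>
lemma sparse_if_circuits_on_one_side:
  assumes conn: "graph_connected E ends" and leafless: "\<forall>v\<in>V E. \<not> is_leaf E ends v"
    and A: "A \<subseteq> E" "A \<noteq> {}" "E - A \<noteq> {}"
    and sep: "\<And>C. circuit C \<Longrightarrow> C \<subseteq> A \<or> C \<subseteq> E - A"
  shows "sparse E"
proof -
  let ?B = "E - A"
  obtain XA PA where XA: "XA \<subseteq> A" "sparse XA" and PA: "PA \<subseteq> A" "A - PA \<subseteq> XA"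
    and ineqA: "2 * card (V A) \<le> card (boundary A) + 2 * card XA"
    and eqA: "card (boundary A) + 2 * card XA \<le> 2 * card (V A) \<Longrightarrow> boundary PA = {}"
    using boundary_inequality[OF A(1) leafless] by metis
  obtain XB PB where XB: "XB \<subseteq> ?B" "sparse XB" and PB: "PB \<subseteq> ?B" "?B - PB \<subseteq> XB"
    and ineqB: "2 * card (V ?B) \<le> card (boundary A) + 2 * card XB"
    and eqB: "card (boundary A) + 2 * card XB \<le> 2 * card (V ?B) \<Longrightarrow> boundary PB = {}"
    using boundary_inequality[OF Diff_subset[of E A] leafless] unfolding boundary_Diff[OF A(1)]
    by metis
  have sparse_XA_XB: "sparse (XA \<union> XB)"
    using sparse_Un_if_circuits_on_one_side[OF A(1) XA XB sep] .
  have finV: "finite (V A)" "finite (V ?B)" using finite_verts A(1) by auto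
  have "card XA + card XB = card (XA \<union> XB)"
    using XA(1) XB(1) A(1) finite_subset_edges[of XA] finite_subset_edges[of XB]
    by (subst card_Un_disjoint) auto
  also have "\<dots> \<le> card (V (XA \<union> XB))"
    using card_le_card_verts_if_sparse[OF sparse_XA_XB] by blast
  also have "\<dots> \<le> card (V A \<union> V ?B)"
  proof (rule card_mono)
    show "finite (V A \<union> V ?B)" using finV by blast
    show "V (XA \<union> XB) \<subseteq> V A \<union> V ?B"
      unfolding verts_Un using verts_mono[OF XA(1), of ends] verts_mono[OF XB(1), of ends] by blast
  qed
  finally have "card XA + card XB \<le> card (V A \<union> V ?B)" .
  moreover have "card (V A \<union> V ?B) + card (boundary A) = card (V A) + card (V ?B)"
    using card_Un_Int[OF finV] unfolding boundary_def by simp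
  ultimately have "card (boundary A) + 2 * card XA \<le> 2 * card (V A)"
    "card (boundary A) + 2 * card XB \<le> 2 * card (V ?B)"
    using ineqA ineqB by linarith+
  then have "boundary PA = {}" "boundary PB = {}" using eqA eqB by blast+
  then have "PA = {}" "PB = {}"
    using trivial_if_empty_boundary[OF conn, of PA] trivial_if_empty_boundary[OF conn, of PB]
      PA(1) PB(1) A by blast+
  then have "E \<subseteq> XA \<union> XB" using PA(2) PB(2) by blast
  then show ?thesis using sparse_subset[OF sparse_XA_XB] by blast
qed

section \<open>Connectivity of \<open>M\<^sub>1(G)\<close>\<close>

definition circuit_class :: "'e \<Rightarrow> 'e set" where
  "circuit_class x = {y\<in>E. y = x \<or> (\<exists>C. circuit C \<and> x \<in> C \<and> y \<in> C)}"

lemma circuit_subset_circuit_class_or_disjoint: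
  assumes C: "circuit C"
  shows "C \<subseteq> circuit_class x \<or> C \<subseteq> E - circuit_class x"
proof (cases "C \<inter> circuit_class x = {}")
  case True
  then show ?thesis using circuit_subset_edges[OF C] by blast
next
  case False
  then obtain w where w: "w \<in> C" "w \<in> circuit_class x" by blast
  have "z \<in> circuit_class x" if z: "z \<in> C" for z
  proof (cases "w = x")
    case True
    with z w C circuit_subset_edges[OF C] show ?thesis unfolding circuit_class_def by blast
  next
    case False
    then obtain C' where C': "circuit C'" "x \<in> C'" "w \<in> C'"
      using w(2) unfolding circuit_class_def by blast
    then have "\<exists>C''. circuit C'' \<and> x \<in> C'' \<and> z \<in> C''"
      using circuit_through_both_if_circuits_meet[OF C'(1) C C'(2) z] w(1) by blast
    with z circuit_subset_edges[OF C] show ?thesis unfolding circuit_class_def by blast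
  qed
  then show ?thesis by blast
qed

lemma M1_connected_if_connected_leafless:
  assumes conn: "graph_connected E ends" and leafless: "\<forall>v\<in>V E. \<not> is_leaf E ends v"
    and C0: "circuit C0"
  shows "mat_connected E circuit"
proof -
  have through_x: "y = x \<or> (\<exists>C. circuit C \<and> x \<in> C \<and> y \<in> C)" if "x \<in> E" "y \<in> E" for x y
  proof -
    have "E - circuit_class x = {}"
    proof (rule ccontr)
      assume "E - circuit_class x \<noteq> {}"
      moreover have "circuit_class x \<subseteq> E" "circuit_class x \<noteq> {}"
        using \<open>x \<in> E\<close> unfolding circuit_class_def by auto
      ultimately have "sparse E"
        using sparse_if_circuits_on_one_side[OF conn leafless]
          circuit_subset_circuit_class_or_disjoint[of _ x] by blast
      then show False using circuit_not_subset_sparse C0 circuit_subset_edges by blast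
    qed
    with \<open>y \<in> E\<close> show ?thesis unfolding circuit_class_def by blast
  qed
  have two: "2 \<le> card E"
    using two_le_card_circuit[OF C0] card_mono[OF finite_edges circuit_subset_edges[OF C0]] by simp
  show ?thesis unfolding mat_connected_def
  proof (intro conjI ballI two)
    fix x y assume x: "x \<in> E" and y: "y \<in> E"
    have "\<not> E \<subseteq> {x}"
    proof
      assume "E \<subseteq> {x}"
      then have "card E \<le> 1" using card_mono[of "{x}" E] by simp
      with two show False by simp
    qed
    then obtain z where z: "z \<in> E" "z \<noteq> x" by blast
    show "\<exists>C. circuit C \<and> x \<in> C \<and> y \<in> C"
      using through_x[OF x y] through_x[OF x z(1)] z(2) by blast
  qed
qed

text \<open>Removing a pendant edge \<open>h\<close> from a circuit loses the vertex \<open>v\<close>.\<close>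
lemma pendant_edge_notin_circuit:
  assumes C: "circuit C" and v: "incident_edges E ends v = {h}"
  shows "h \<notin> C"
proof
  assume h: "h \<in> C"
  let ?D = "C - {h}"
  have CE: "C \<subseteq> E" using circuit_subset_edges[OF C] .
  have "v \<in> ends h" using v unfolding incident_edges_def by blast
  then have "v \<in> V C" using h by (auto simp: mem_verts_iff)
  moreover have "v \<notin> V ?D"
    using v CE unfolding incident_edges_def by (auto simp: mem_verts_iff)
  moreover have "V ?D \<subseteq> V C" by (rule verts_mono) blast
  ultimately have "card (V ?D) < card (V C)"
    using card_psubset_of_mem[OF finite_verts[OF CE]] by blast
  moreover have "card ?D \<le> card (V ?D)"
    using h by (intro card_le_card_verts_if_psubset_circuit[OF C]) blast
  moreover have "card ?D + 1 = card C"
    using h finite_circuit[OF C] card_Diff1_less[of C h] by simp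
  ultimately show False using card_circuit[OF C] by simp
qed

lemma connected_if_M1_connected:
  assumes "mat_connected E circuit"
  shows "graph_connected E ends"
  unfolding graph_connected_def
proof (intro conjI ballI)
  from assms obtain h where h: "h \<in> E" unfolding mat_connected_def by fastforce
  then obtain z where "z \<in> ends h" using ends_nonempty by blast
  with h have "z \<in> V E" by (auto simp: mem_verts_iff)
  then show "V E \<noteq> {}" by blast
next
  fix u w assume "u \<in> V E" "w \<in> V E"
  then obtain hu hw where hu: "hu \<in> E" "u \<in> ends hu" and hw: "hw \<in> E" "w \<in> ends hw"
    by (auto simp: mem_verts_iff)
  let ?P = "component_edges E ends u"
  have "hu \<in> ?P" using hu unfolding component_edges_def reach_def by blast
  moreover obtain C where C: "circuit C" "hu \<in> C" "hw \<in> C"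
    using assms hu(1) hw(1) unfolding mat_connected_def by blast
  ultimately have "hw \<in> ?P"
    using circuit_subset_or_disjoint_if_empty_boundary[OF C(1) boundary_component_edges] by blast
  then obtain z where z: "z \<in> ends hw" "reach E ends u z" unfolding component_edges_def by blast
  have "(z, w) \<in> adj E ends" using hw z(1) unfolding adj_def by blast
  with z(2) show "reach E ends u w" unfolding reach_def by simp
qed

lemma component_edges_eq_if_connected:
  assumes "graph_connected E ends" "v \<in> V E"
  shows "component_edges E ends v = E"
proof -
  have "h \<in> component_edges E ends v" if h: "h \<in> E" for h
  proof -
    obtain z where z: "z \<in> ends h" using ends_nonempty[OF h] by blast
    with h have "z \<in> V E" by (auto simp: mem_verts_iff)
    with assms have "reach E ends v z" unfolding graph_connected_def by blast
    with h z show ?thesis unfolding component_edges_def by blast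
  qed
  then show ?thesis unfolding component_edges_def by blast
qed

lemma basis_nonempty:
  assumes "E \<noteq> {}" "mat_basis E circuit B"
  shows "B \<noteq> {}"
proof
  assume B: "B = {}"
  obtain x where x: "x \<in> E" using assms(1) by blast
  have "\<not> C \<subseteq> {x}" if "circuit C" for C
  proof
    assume "C \<subseteq> {x}"
    then have "card C \<le> 1" using card_mono[of "{x}" C] by simp
    with two_le_card_circuit[OF that] show False by simp
  qed
  with x have "mat_indep E circuit {x}" unfolding mat_indep_def by blast
  with assms(2) B show False unfolding mat_basis_def by blast
qed

lemma cacti_graph_if_M1_connected:
  assumes "mat_connected E circuit"
  shows "cacti_graph E ends"
  unfolding cacti_graph_def
proof (intro conjI ballI notI)
  fix v assume "v \<in> V E" "is_leaf E ends v"
  then obtain h where h: "incident_edges E ends v = {h}" unfolding is_leaf_def by blast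
  then have "h \<in> E" unfolding incident_edges_def by blast
  with assms obtain C where "circuit C" "h \<in> C" unfolding mat_connected_def by blast
  with pendant_edge_notin_circuit h show False by blast
next
  fix v assume v: "v \<in> V E" and "is_cycle_graph (component_edges E ends v) ends"
  then have "\<forall>w\<in>V E. degree E ends w \<le> 2"
    using component_edges_eq_if_connected[OF connected_if_M1_connected[OF assms] v]
    unfolding is_cycle_graph_def by simp
  then have "sparse E" by (rule sparse_if_degree_le_two)
  moreover obtain C where "circuit C"
    using assms v unfolding mat_connected_def by (auto simp: mem_verts_iff)
  ultimately show False using circuit_not_subset_sparse circuit_subset_edges by blast
qed

end

theorem mainTheorem15:
  fixes E :: "'e set" and ends :: "'e \<Rightarrow> 'v set"
  assumes "graph E ends"
  shows "(mat_nontrivial E (M1_circuit E ends) \<and> graph_connected E ends \<and> cacti_graph E ends)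
         \<longleftrightarrow> mat_connected E (M1_circuit E ends)"
proof -
  interpret multigraph E ends using assms by unfold_locales
  show ?thesis
  proof
    assume "mat_nontrivial E circuit \<and> graph_connected E ends \<and> cacti_graph E ends"
    then show "mat_connected E circuit"
      using M1_connected_if_connected_leafless
      unfolding mat_nontrivial_def cacti_graph_def by blast
  next
    assume conn: "mat_connected E circuit"
    then obtain C where "circuit C" unfolding mat_connected_def by fastforce
    moreover have "E \<noteq> {}" using conn unfolding mat_connected_def by auto
    then have "\<exists>D. mat_cocircuit E circuit D"
      using exists_cocircuit finite_edges basis_nonempty by blast
    ultimately show "mat_nontrivial E circuit \<and> graph_connected E ends \<and> cacti_graph E ends"
      using connected_if_M1_connected[OF conn] cacti_graph_if_M1_connected[OF conn]
      unfolding mat_nontrivial_def by blast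
  qed
qed

end
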